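(* For integers $n\ge1$, $k\ge0$, $\ell\ge0$, let \[E(n,k,\ell)=\sum_{\substack{i_0+i_1+\cdots+i_k=n\\ j_0+j_1+\cdots+j_k=\ell}}\prod_{t=0}^kN(i_t,j_t+1),\] where the sum ranges over all compositions $(i_0,\ldots,i_k)$ of $n$ into $k+1$ positive parts and all weak compositions $(j_0,\ldots,j_k)$ of $\ell$ into $k+1$ nonnegative parts. Then $E(n,k,\ell)=N_k(n,\ell+1)$.
   Context: $N(i,j)=\frac1i\binom ij\binom i{j-1}$ is a Narayana number, and the generalized Narayana numbers are $N_k(n,r)=\frac{k+1}{n}\binom{n}{r+k}\binom{n}{r-1}$ (so $N_0=N$). *)

theory Defs
  imports Complex_Main "HOL-Library.FuncSet"
begin

text \<open>Narayana number N(i,j) = (1/i) binom(i,j) binom(i,j-1), as a rational.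
  Only used with j >= 1, so j - 1 does not truncate.\<close>
definition narayana :: "nat \<Rightarrow> nat \<Rightarrow> rat" where
  "narayana i j = (1 / of_nat i) * of_nat (i choose j) * of_nat (i choose (j - 1))"

definition gen_narayana :: "nat \<Rightarrow> nat \<Rightarrow> nat \<Rightarrow> rat" where
  "gen_narayana k n r = (of_nat (k + 1) / of_nat n) * of_nat (n choose (r + k)) * of_nat (n choose (r - 1))"

definition compositions :: "nat \<Rightarrow> nat \<Rightarrow> (nat \<Rightarrow> nat) set" where
  "compositions n k = {c \<in> {0..k} \<rightarrow>\<^sub>E {1..n}. (\<Sum>t\<le>k. c t) = n}"

definition weak_compositions :: "nat \<Rightarrow> nat \<Rightarrow> (nat \<Rightarrow> nat) set" where
  "weak_compositions l k = {c \<in> {0..k} \<rightarrow>\<^sub>E {0..l}. (\<Sum>t\<le>k. c t) = l}"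

definition E :: "nat \<Rightarrow> nat \<Rightarrow> nat \<Rightarrow> rat" where
  "E n k l = (\<Sum>(i, j) \<in> compositions n k \<times> weak_compositions l k.
               \<Prod>t\<le>k. narayana (i t) (j t + 1))"

end

theory Submission
  imports Defs
begin

text \<open>Let \<open>F(x,y) = \<Sum> N(n,l+1) x\<^sup>n y\<^sup>l\<close> be the bivariate Narayana series. Splitting off the
  last parts of a pair of compositions shows that \<open>E(n,k,l)\<close> is the coefficient of \<open>x\<^sup>n y\<^sup>l\<close>
  in \<open>F\<^sup>k\<^sup>+\<^sup>1\<close>. Candidate coefficients \<open>m/n \<cdot> C(n,l+m) \<cdot> C(n,l)\<close> of \<open>F\<^sup>m\<close> satisfy the
  recurrence in \<open>n\<close> encoded by \<open>F = x(1+F)(1+yF)\<close>, and this recurrence alone yields, by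
  induction on \<open>n\<close>, that their convolution is multiplicative in \<open>m\<close>. For \<open>m = k+1\<close> the
  candidate is \<open>N\<^sub>k(n,l+1)\<close>.\<close>

lemma of_nat_Suc_times_binomial:
  "of_nat (Suc c) * (of_nat (n choose Suc c) :: 'a::field_char_0) = (of_nat n - of_nat c) * of_nat (n choose c)"
  by (metis binomial_gbinomial gbinomial_absorb_comp gbinomial_absorption of_nat_mult)

text \<open>\<open>[x\<^sup>n y\<^sup>l] F\<^sup>m\<close>; for \<open>n = 0\<close> only \<open>F\<^sup>0 = 1\<close> contributes, as \<open>F\<close> has no constant term.\<close>
definition narayana_pow :: "nat \<Rightarrow> nat \<Rightarrow> nat \<Rightarrow> rat" where
  "narayana_pow m n l = (if n = 0 then of_bool (m = 0 \<and> l = 0)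
     else of_nat m / of_nat n * of_nat (n choose (l + m)) * of_nat (n choose l))"

lemma narayana_pow_exponent_0: "narayana_pow 0 = (\<lambda>n l. of_bool (n = 0 \<and> l = 0))"
  and narayana_pow_degree_0: "narayana_pow m 0 l = of_bool (m = 0 \<and> l = 0)"
  by (simp_all add: narayana_pow_def fun_eq_iff)

lemma narayana_eq_narayana_pow: "narayana i (Suc j) = narayana_pow 1 i j"
  by (simp add: narayana_def narayana_pow_def)

lemma narayana_pow_recurrence_0:
  assumes "n \<ge> 1"
  shows "narayana_pow (Suc m) (Suc n) 0 = narayana_pow m n 0 + narayana_pow (Suc m) n 0"
proof -
  define X where "X = (of_nat (n choose m) :: rat)"
  define P where "P = (of_nat (n choose Suc m) :: rat)"
  have absorb: "(of_nat m + 1) * P = (of_nat n - of_nat m) * X"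
    using of_nat_Suc_times_binomial[of m n] by (simp add: X_def P_def algebra_simps)
  have "of_nat n * ((of_nat m + 1) * (X + P)) = (of_nat n + 1) * (of_nat m * X + (of_nat m + 1) * P)"
    using absorb by algebra
  then have "of_nat (Suc m) / (of_nat n + 1) * (X + P) = (of_nat m * X + of_nat (Suc m) * P) / of_nat n"
    using assms by (simp add: field_simps)
  then show ?thesis
    using assms by (simp add: narayana_pow_def X_def P_def add.commute add_divide_distrib)
      (simp add: field_simps)
qed

lemma narayana_pow_recurrence_Suc:
  assumes "n \<ge> 1"
  shows "narayana_pow (Suc m) (Suc n) (Suc l) =
           narayana_pow m n (Suc l) + narayana_pow (Suc m) n (Suc l)
           + narayana_pow (Suc m) n l + narayana_pow (Suc (Suc m)) n l"
proof -
  define X where "X = (of_nat (n choose Suc (l + m)) :: rat)"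
  define P where "P = (of_nat (n choose Suc (Suc (l + m))) :: rat)"
  define Y where "Y = (of_nat (n choose l) :: rat)"
  define Q where "Q = (of_nat (n choose Suc l) :: rat)"
  define a b c where "a = (of_nat (Suc l) :: rat)" "b = (of_nat (Suc m) :: rat)" "c = (of_nat n :: rat)"
  have absorb_X: "(a + b) * P = (c - (a + b) + 1) * X"
    using of_nat_Suc_times_binomial[of "Suc (l + m)" n] by (simp add: X_def P_def a_b_c_def algebra_simps)
  have absorb_Y: "a * Q = (c - a + 1) * Y"
    using of_nat_Suc_times_binomial[of l n] by (simp add: Y_def Q_def a_b_c_def)
  \<comment> \<open>from the absorption identities the target follows only up to the factor \<open>(a + b) a\<close>\<close>
  have "(a + b) * a * (c * (b * (X + P) * (Y + Q))
          - (c + 1) * ((b - 1) * X * Q + b * P * Q + b * X * Y + (b + 1) * P * Y)) = 0"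
    using absorb_X absorb_Y by algebra
  moreover have "(a + b) * a \<noteq> 0"
    unfolding a_b_c_def by (simp del: of_nat_Suc add: of_nat_add[symmetric])
  ultimately have "c * (b * (X + P) * (Y + Q))
                     = (c + 1) * ((b - 1) * X * Q + b * P * Q + b * X * Y + (b + 1) * P * Y)"
    by simp
  then have "b / (c + 1) * (X + P) * (Y + Q)
               = ((b - 1) * X * Q + b * P * Q + b * X * Y + (b + 1) * P * Y) / c"
    using assms by (simp add: a_b_c_def field_simps)
  then show ?thesis
    using assms by (simp add: narayana_pow_def X_def P_def Y_def Q_def a_b_c_def field_simps)
qed

text \<open>Coefficient of \<open>x\<^sup>n\<^sup>+\<^sup>1 y\<^sup>l\<close> in \<open>F\<^sup>m = F\<^sup>m\<^sup>-\<^sup>1 \<cdot> x(1+F)(1+yF)\<close>.\<close>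
lemma narayana_pow_recurrence:
  assumes "m \<ge> 1"
  shows "narayana_pow m (Suc n) l = narayana_pow (m - 1) n l + narayana_pow m n l
           + (if l = 0 then 0 else narayana_pow m n (l - 1) + narayana_pow (Suc m) n (l - 1))"
proof -
  obtain m' where m: "m = Suc m'"
    using assms by (cases m) auto
  show ?thesis
  proof (cases "n = 0")
    case True
    then show ?thesis
      unfolding m by (cases l; cases m') (auto simp: narayana_pow_def)
  next
    case False
    then show ?thesis
      unfolding m using narayana_pow_recurrence_0 narayana_pow_recurrence_Suc by (cases l) auto
  qed
qed

definition convolution :: "(nat \<Rightarrow> nat \<Rightarrow> 'a::semiring_0) \<Rightarrow> (nat \<Rightarrow> nat \<Rightarrow> 'a) \<Rightarrow> nat \<Rightarrow> nat \<Rightarrow> 'a" where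
  "convolution f g n l = (\<Sum>i\<le>n. \<Sum>j\<le>l. f i j * g (n - i) (l - j))"

lemma convolution_add_left:
  "convolution (\<lambda>i j. f i j + f' i j) g n l = convolution f g n l + convolution f' g n l"
  by (simp add: convolution_def distrib_right sum.distrib)

lemma convolution_Suc:
  "convolution f g (Suc n) l = (\<Sum>j\<le>l. f 0 j * g (Suc n) (l - j)) + convolution (\<lambda>i. f (Suc i)) g n l"
  by (simp add: convolution_def sum.atMost_Suc_shift del: sum.atMost_Suc)

lemma convolution_shift:
  "convolution (\<lambda>i j. if j = 0 then 0 else f i (j - 1)) g n l =
     (if l = 0 then 0 else convolution f g n (l - 1))"
  by (cases l) (simp_all add: convolution_def sum.atMost_Suc_shift del: sum.atMost_Suc)

lemma convolution_unit_left:
  fixes g :: "nat \<Rightarrow> nat \<Rightarrow> 'a::semiring_1"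
  shows "convolution (\<lambda>i j. of_bool (i = 0 \<and> j = 0)) g n l = g n l"
proof -
  have "convolution (\<lambda>i j. of_bool (i = 0 \<and> j = 0)) g n l = (\<Sum>i\<le>n. if i = 0 then g n l else 0)"
    unfolding convolution_def
    by (intro sum.cong) (auto simp: of_bool_def if_distrib[of "\<lambda>x. x * _"] sum.delta cong: if_cong)
  then show ?thesis
    by simp
qed

lemma convolution_narayana_pow_0: "convolution (narayana_pow 0) g n l = g n l"
  by (simp add: narayana_pow_exponent_0 convolution_unit_left)

lemma narayana_pow_add: "convolution (narayana_pow a) (narayana_pow b) n l = narayana_pow (a + b) n l"
proof (induction n arbitrary: a b l)
  case 0
  show ?case
    by (cases a) (simp_all add: convolution_narayana_pow_0 convolution_def narayana_pow_degree_0)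
next
  case (Suc n)
  show ?case
  proof (cases a)
    case 0
    then show ?thesis
      by (simp add: convolution_narayana_pow_0)
  next
    case (Suc a')
    let ?shift = "\<lambda>i j. if j = 0 then 0 else narayana_pow a i (j - 1) + narayana_pow (Suc a) i (j - 1)"
    have recurrence: "(\<lambda>i. narayana_pow a (Suc i)) =
        (\<lambda>i j. narayana_pow a' i j + narayana_pow a i j + ?shift i j)"
      using narayana_pow_recurrence[of a] Suc by (simp add: fun_eq_iff)
    have "convolution (narayana_pow a) (narayana_pow b) (Suc n) l
        = convolution (\<lambda>i. narayana_pow a (Suc i)) (narayana_pow b) n l"
      using Suc by (simp add: convolution_Suc narayana_pow_degree_0)
    also have "\<dots> = convolution (narayana_pow a') (narayana_pow b) n l
                   + convolution (narayana_pow a) (narayana_pow b) n l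
                   + convolution ?shift (narayana_pow b) n l"
      by (simp only: recurrence convolution_add_left)
    also have "convolution ?shift (narayana_pow b) n l = (if l = 0 then 0
        else convolution (narayana_pow a) (narayana_pow b) n (l - 1)
           + convolution (narayana_pow (Suc a)) (narayana_pow b) n (l - 1))"
      using convolution_shift[of "\<lambda>i j. narayana_pow a i j + narayana_pow (Suc a) i j"]
      by (simp only: convolution_add_left)
    finally show ?thesis
      using Suc.IH narayana_pow_recurrence[of "a + b" n l] Suc by simp
  qed
qed

definition compositions_ge :: "nat \<Rightarrow> nat \<Rightarrow> nat \<Rightarrow> (nat \<Rightarrow> nat) set" where
  "compositions_ge lo n k = {c \<in> {0..k} \<rightarrow>\<^sub>E {lo..n}. (\<Sum>t\<le>k. c t) = n}"

lemma compositions_eq_compositions_ge: "compositions n k = compositions_ge 1 n k"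
  and weak_compositions_eq_compositions_ge: "weak_compositions n k = compositions_ge 0 n k"
  by (simp_all add: compositions_def weak_compositions_def compositions_ge_def)

lemma finite_compositions_ge: "finite (compositions_ge lo n k)"
  unfolding compositions_ge_def
  by (rule finite_subset[of _ "{0..k} \<rightarrow>\<^sub>E {lo..n}"]) (auto intro: finite_PiE)

lemma compositions_ge_0: "compositions_ge lo n 0 = (if lo \<le> n then {(\<lambda>t. undefined)(0 := n)} else {})"
proof (intro equalityI subsetI)
  fix c
  assume "c \<in> compositions_ge lo n 0"
  then have "c \<in> {0..0} \<rightarrow>\<^sub>E {lo..n}" "c 0 = n"
    by (auto simp: compositions_ge_def)
  then show "c \<in> (if lo \<le> n then {(\<lambda>t. undefined)(0 := n)} else {})"
    by (auto simp: PiE_def extensional_def fun_eq_iff)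
next
  fix c :: "nat \<Rightarrow> nat"
  assume "c \<in> (if lo \<le> n then {(\<lambda>t. undefined)(0 := n)} else {})"
  then show "c \<in> compositions_ge lo n 0"
    by (auto simp: compositions_ge_def PiE_def extensional_def split: if_splits)
qed

lemma compositions_ge_Suc_subset:
  "compositions_ge lo n (Suc k) \<subseteq>
     (\<lambda>(i, c). c(Suc k := i)) ` (SIGMA i:{lo..n}. compositions_ge lo (n - i) k)"
proof
  fix c
  assume "c \<in> compositions_ge lo n (Suc k)"
  then have c: "c \<in> {0..Suc k} \<rightarrow>\<^sub>E {lo..n}" and sum: "(\<Sum>t\<le>k. c t) + c (Suc k) = n"
    by (auto simp: compositions_ge_def)
  have "c t \<le> (\<Sum>t\<le>k. c t)" if "t \<le> k" for t
    using that by (intro member_le_sum) auto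
  with c sum have "c(Suc k := undefined) \<in> compositions_ge lo (n - c (Suc k)) k"
    by (auto simp: compositions_ge_def PiE_def Pi_def extensional_def)
  moreover have "c (Suc k) \<in> {lo..n}"
    using c by auto
  ultimately show "c \<in> (\<lambda>(i, c). c(Suc k := i)) ` (SIGMA i:{lo..n}. compositions_ge lo (n - i) k)"
    by (intro rev_image_eqI[of "(c (Suc k), c(Suc k := undefined))"]) auto
qed

lemma compositions_ge_Suc_supset:
  "(\<lambda>(i, c). c(Suc k := i)) ` (SIGMA i:{lo..n}. compositions_ge lo (n - i) k) \<subseteq>
     compositions_ge lo n (Suc k)"
proof clarify
  fix i c
  assume i: "i \<in> {lo..n}" and "c \<in> compositions_ge lo (n - i) k"
  then have c: "c \<in> {0..k} \<rightarrow>\<^sub>E {lo..n - i}" and sum: "(\<Sum>t\<le>k. c t) = n - i"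
    by (auto simp: compositions_ge_def)
  have "c(Suc k := i) \<in> {0..Suc k} \<rightarrow>\<^sub>E {lo..n}"
    using c i by (auto simp: PiE_def Pi_def extensional_def le_Suc_eq)
  moreover have "(\<Sum>t\<le>k. (c(Suc k := i)) t) = (\<Sum>t\<le>k. c t)"
    by (intro sum.cong) auto
  ultimately show "c(Suc k := i) \<in> compositions_ge lo n (Suc k)"
    using sum i by (simp add: compositions_ge_def)
qed

lemma inj_on_compositions_ge_Suc:
  "inj_on (\<lambda>(i, c). c(Suc k := i)) (SIGMA i:{lo..n}. compositions_ge lo (n - i) k)"
proof (rule inj_onI, clarify)
  fix i c j d
  assume "c \<in> compositions_ge lo (n - i) k" "d \<in> compositions_ge lo (n - j) k"
  then have "c (Suc k) = d (Suc k)"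
    by (simp add: compositions_ge_def PiE_def extensional_def)
  moreover assume "c(Suc k := i) = d(Suc k := j)"
  ultimately show "i = j \<and> c = d"
    by (metis fun_upd_idem_iff fun_upd_upd fun_upd_same)
qed

lemma bij_betw_compositions_ge_Suc:
  "bij_betw (\<lambda>(i, c). c(Suc k := i))
     (SIGMA i:{lo..n}. compositions_ge lo (n - i) k) (compositions_ge lo n (Suc k))"
  unfolding bij_betw_def
  using inj_on_compositions_ge_Suc compositions_ge_Suc_subset compositions_ge_Suc_supset by blast

lemma E_eq_sum_compositions_ge:
  "E n k l = (\<Sum>c\<in>compositions_ge 1 n k. \<Sum>d\<in>compositions_ge 0 l k. \<Prod>t\<le>k. narayana (c t) (d t + 1))"
  unfolding E_def compositions_eq_compositions_ge weak_compositions_eq_compositions_ge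
  by (simp add: sum.cartesian_product)

lemma E_Suc: "E n (Suc k) l = (\<Sum>i\<in>{1..n}. \<Sum>j\<in>{0..l}. narayana i (j + 1) * E (n - i) k (l - j))"
proof -
  let ?prod = "\<lambda>c d. \<Prod>t\<le>k. narayana (c t) (d t + 1)"
  have prod_upd: "(\<Prod>t\<le>Suc k. narayana ((c(Suc k := i)) t) ((d(Suc k := j)) t + 1))
                    = narayana i (j + 1) * ?prod c d" for c d i j
  proof -
    have "(\<Prod>t\<le>k. narayana ((c(Suc k := i)) t) ((d(Suc k := j)) t + 1)) = ?prod c d"
      by (intro prod.cong) auto
    then show ?thesis
      by simp
  qed
  have "E n (Suc k) l = (\<Sum>(i, c)\<in>(SIGMA i:{1..n}. compositions_ge 1 (n - i) k).
                          \<Sum>(j, d)\<in>(SIGMA j:{0..l}. compositions_ge 0 (l - j) k).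
                            narayana i (j + 1) * ?prod c d)"
    unfolding E_eq_sum_compositions_ge
      sum.reindex_bij_betw[OF bij_betw_compositions_ge_Suc, symmetric]
    by (simp add: case_prod_beta prod_upd mult.commute)
  also have "\<dots> = (\<Sum>i\<in>{1..n}. \<Sum>c\<in>compositions_ge 1 (n - i) k. \<Sum>j\<in>{0..l}.
                     \<Sum>d\<in>compositions_ge 0 (l - j) k. narayana i (j + 1) * ?prod c d)"
    by (simp add: sum.Sigma[symmetric] finite_compositions_ge)
  also have "\<dots> = (\<Sum>i\<in>{1..n}. \<Sum>j\<in>{0..l}. \<Sum>c\<in>compositions_ge 1 (n - i) k.
                     \<Sum>d\<in>compositions_ge 0 (l - j) k. narayana i (j + 1) * ?prod c d)"
    by (intro sum.cong refl sum.swap)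
  also have "\<dots> = (\<Sum>i\<in>{1..n}. \<Sum>j\<in>{0..l}. narayana i (j + 1) * E (n - i) k (l - j))"
    by (simp add: E_eq_sum_compositions_ge sum_distrib_left)
  finally show ?thesis .
qed

lemma E_0: "E n 0 l = narayana_pow 1 n l"
  by (simp add: E_eq_sum_compositions_ge compositions_ge_0 narayana_def narayana_pow_def)

lemma E_eq_narayana_pow: "E n k l = narayana_pow (Suc k) n l"
proof (induction k arbitrary: n l)
  case 0
  show ?case
    by (simp add: E_0)
next
  case (Suc k)
  have "E n (Suc k) l = (\<Sum>i\<in>{1..n}. \<Sum>j\<le>l. narayana_pow 1 i j * narayana_pow (Suc k) (n - i) (l - j))"
    by (simp add: E_Suc Suc.IH narayana_eq_narayana_pow atLeast0AtMost)
  also have "\<dots> = convolution (narayana_pow 1) (narayana_pow (Suc k)) n l"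
    unfolding convolution_def
    by (rule sum.mono_neutral_left) (auto simp: narayana_pow_def)
  also have "\<dots> = narayana_pow (Suc (Suc k)) n l"
    by (simp add: narayana_pow_add)
  finally show ?case .
qed

theorem lemma4p1:
  fixes n k l :: nat
  assumes "n \<ge> 1"
  shows "E n k l = gen_narayana k n (l + 1)"
  using assms by (simp add: E_eq_narayana_pow narayana_pow_def gen_narayana_def)

end
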